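(* Let $k$ be a perfect field of characteristic $p>0$. Let $V$ be a $k[\mathbb Z/p\mathbb Z]$-module and $W\subset V$ a $k[\mathbb Z/p\mathbb Z]$-submodule such that $V/W$ is a free $k[\mathbb Z/p\mathbb Z]$-module. Then for every integer $n\ge2$, the quotient $V^{\otimes n}/W^{\otimes n}$ is a free $k[\mathbb Z/p\mathbb Z]$-module.
   Context: Tensor products are over $k$, and $\mathbb Z/p\mathbb Z$ acts on $V^{\otimes n}$ and $W^{\otimes n}\subset V^{\otimes n}$ diagonally. *)

theory Defs
  imports Complex_Main "HOL-Library.Function_Algebras"
begin

text \<open>A k[Z/pZ]-module is a k-vector space (scalar multiplication s) together with
  the linear action of the generator 1 of Z/pZ, a map tau with tau^p = id.  This is the
  definition of a k[Z/pZ]-basis of X/U written out over k, since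
  k[Z/pZ] has k-basis 1, tau, ..., tau^(p-1).\<close>

definition free_quot ::
  "('k::field \<Rightarrow> 'b::ab_group_add \<Rightarrow> 'b) \<Rightarrow> nat \<Rightarrow> ('b \<Rightarrow> 'b) \<Rightarrow> 'b set \<Rightarrow> 'b set \<Rightarrow> bool" where
  "free_quot s p tau X U \<longleftrightarrow>
     (\<exists>B \<subseteq> X.
        (\<forall>S c. finite S \<longrightarrow> S \<subseteq> B \<times> {..<p} \<longrightarrow>
               (\<Sum>(b,i)\<in>S. s (c (b,i)) ((tau ^^ i) b)) \<in> U \<longrightarrow> (\<forall>x\<in>S. c x = 0))
      \<and> X \<subseteq> module.span s (U \<union> {(tau ^^ i) b | b i. b \<in> B \<and> i < p}))"

text \<open>V^{\<otimes>n} is realised as the free k-vector space on V^n (finitely supported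
  functions on lists of length n) modulo the multilinearity relations.\<close>

definition fscale :: "'k::field \<Rightarrow> ('v list \<Rightarrow> 'k) \<Rightarrow> ('v list \<Rightarrow> 'k)" where
  "fscale c f = (\<lambda>xs. c * f xs)"

definition tdelta :: "'v list \<Rightarrow> ('v list \<Rightarrow> 'k::field)" where
  "tdelta xs = (\<lambda>ys. if ys = xs then 1 else 0)"

definition free_on_lists :: "nat \<Rightarrow> ('v list \<Rightarrow> 'k::field) set" where
  "free_on_lists n = module.span fscale (tdelta ` {xs. length xs = n})"

definition multilin_rels ::
  "('k::field \<Rightarrow> 'v::ab_group_add \<Rightarrow> 'v) \<Rightarrow> nat \<Rightarrow> ('v list \<Rightarrow> 'k) set" where
  "multilin_rels s n =
     {tdelta (xs[i := a + b]) - tdelta (xs[i := a]) - tdelta (xs[i := b]) | xs i a b.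
        length xs = n \<and> i < n}
   \<union> {tdelta (xs[i := s c a]) - fscale c (tdelta (xs[i := a])) | xs i c a.
        length xs = n \<and> i < n}"

text \<open>Preimage in the free space of the image of W^{\<otimes>n} in V^{\<otimes>n}: the span of the
  relations together with the pure tensors of elements of W.  The quotient of the free
  space by it is V^{\<otimes>n}/W^{\<otimes>n}.\<close>

definition tensor_sub_rels ::
  "('k::field \<Rightarrow> 'v::ab_group_add \<Rightarrow> 'v) \<Rightarrow> nat \<Rightarrow> 'v set \<Rightarrow> ('v list \<Rightarrow> 'k) set" where
  "tensor_sub_rels s n W =
     module.span fscale (multilin_rels s n \<union> tdelta ` {xs. length xs = n \<and> set xs \<subseteq> W})"

text \<open>Diagonal action: x1 \<otimes> ... \<otimes> xn \<mapsto> sigma x1 \<otimes> ... \<otimes> sigma xn;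
  on functions this is f \<mapsto> f \<circ> map (inv sigma) (sigma is bijective).\<close>

definition tensor_act :: "('v \<Rightarrow> 'v) \<Rightarrow> ('v list \<Rightarrow> 'k) \<Rightarrow> ('v list \<Rightarrow> 'k)" where
  "tensor_act sigma f = (\<lambda>ys. f (map (inv sigma) ys))"

end

theory Submission
  imports Defs
begin

(* Choose a k-basis A of W. If B is a k[Z/pZ]-basis of V/W, the vectors sigma^i b (b in B, i < p)
   extend A to a k-basis of V. Call a word in this basis a basis word if its first letter outside A
   lies in B. The diagonal orbits of the pure tensors of basis words form a k[Z/pZ]-basis of
   V^(tensor n)/W^(tensor n).
   Spanning: by multilinearity it suffices to treat pure tensors of basis vectors. Such a tensor lies
   in W^(tensor n) unless some letter is outside A; if the first such letter is sigma^d b, applying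
   sigma^(-d) diagonally gives a tensor whose earlier letters are in W and whose letter there is b,
   and expanding it again produces only basis words.
   Independence: for a basis word es and i0 < p, the tensor product of the coordinate functionals
   of the letters of es, precomposed with sigma^(-i0), vanishes on W^(tensor n) because the factor
   at the first B-letter of es vanishes on W; it is 1 on sigma^i0 es and 0 on every other
   sigma^i ts. *)

interpretation F: vector_space "fscale :: 'k::field \<Rightarrow> ('v list \<Rightarrow> 'k) \<Rightarrow> _"
  by unfold_locales (auto simp: fscale_def fun_eq_iff algebra_simps)

interpretation K: vector_space "(*) :: 'k::field \<Rightarrow> 'k \<Rightarrow> 'k"
  by unfold_locales (auto simp: algebra_simps)

interpretation FF: vector_space_pair "fscale :: 'k::field \<Rightarrow> ('v list \<Rightarrow> 'k) \<Rightarrow> _" fscale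
  by unfold_locales

interpretation FK: vector_space_pair "fscale :: 'k::field \<Rightarrow> ('v list \<Rightarrow> 'k) \<Rightarrow> _" "(*)"
  by unfold_locales

lemma inj_tdelta: "inj (tdelta :: 'v list \<Rightarrow> 'v list \<Rightarrow> 'k::field)"
  by (rule injI) (auto simp: tdelta_def fun_eq_iff split: if_splits)

lemma independent_tdelta: "F.independent (range (tdelta :: 'v list \<Rightarrow> 'v list \<Rightarrow> 'k::field))"
  unfolding F.independent_explicit_module
proof (intro allI impI)
  fix t u d
  assume t: "finite t" "t \<subseteq> range (tdelta :: 'v list \<Rightarrow> 'v list \<Rightarrow> 'k)"
    and sum0: "(\<Sum>e\<in>t. fscale (u e) e) = 0" and d: "d \<in> t"
  obtain xs where xs: "d = tdelta xs" using d t(2) by blast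
  have "0 = (\<Sum>e\<in>t. fscale (u e) e) xs" by (simp add: sum0)
  also have "\<dots> = (\<Sum>e\<in>t. u e * e xs)"
    using t(1) by (induction t rule: finite_induct) (simp_all add: fscale_def)
  also have "\<dots> = u d"
  proof -
    have "e xs = 0" if "e \<in> t - {d}" for e
      using that t(2) by (auto simp: xs tdelta_def)
    then show ?thesis by (simp add: sum.remove[OF t(1) d] xs tdelta_def sum.neutral)
  qed
  finally show "u d = 0" by simp
qed

definition pure_prod :: "(nat \<Rightarrow> 'v \<Rightarrow> 'k::comm_monoid_mult) \<Rightarrow> 'v list \<Rightarrow> 'k" where
  "pure_prod lam xs = (\<Prod>j<length xs. lam j (xs ! j))"

definition tensor_functional :: "(nat \<Rightarrow> 'v \<Rightarrow> 'k::field) \<Rightarrow> ('v list \<Rightarrow> 'k) \<Rightarrow> 'k" where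
  "tensor_functional lam = FK.construct (range tdelta) (\<lambda>d. pure_prod lam (the_inv tdelta d))"

lemma linear_tensor_functional: "Vector_Spaces.linear fscale (*) (tensor_functional lam)"
  unfolding tensor_functional_def by (rule FK.linear_construct[OF independent_tdelta])

lemma tensor_functional_tdelta: "tensor_functional lam (tdelta xs) = pure_prod lam xs"
  unfolding tensor_functional_def
  by (simp add: FK.construct_basis[OF independent_tdelta] the_inv_f_f[OF inj_tdelta])

lemma pure_prod_update:
  assumes "i < length xs"
  shows "pure_prod lam (xs[i := v]) = lam i v * (\<Prod>j\<in>{..<length xs} - {i}. lam j (xs ! j))"
  using assms unfolding pure_prod_def
  by (simp add: prod.remove[of _ i])

lemma tensor_sub_rels_generatorE:
  assumes "g \<in> multilin_rels s n \<union> tdelta ` {xs. length xs = n \<and> set xs \<subseteq> W}"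
  obtains (additive) xs i a b
    where "g = tdelta (xs[i := a + b]) - tdelta (xs[i := a]) - tdelta (xs[i := b])"
      and "length xs = n" and "i < n"
  | (homogeneous) xs i c a
    where "g = tdelta (xs[i := s c a]) - fscale c (tdelta (xs[i := a]))"
      and "length xs = n" and "i < n"
  | (pure) xs where "g = tdelta xs" and "length xs = n" and "set xs \<subseteq> W"
  using assms unfolding multilin_rels_def by blast

lemma additive_rel_in_tensor_sub_rels:
  "length xs = n \<Longrightarrow> i < n \<Longrightarrow>
    tdelta (xs[i := a + b]) - tdelta (xs[i := a]) - tdelta (xs[i := b]) \<in> tensor_sub_rels s n W"
  unfolding tensor_sub_rels_def multilin_rels_def by (rule F.span_base) blast

lemma homogeneous_rel_in_tensor_sub_rels:
  "length xs = n \<Longrightarrow> i < n \<Longrightarrow>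
    tdelta (xs[i := s c a]) - fscale c (tdelta (xs[i := a])) \<in> tensor_sub_rels s n W"
  unfolding tensor_sub_rels_def multilin_rels_def by (rule F.span_base) blast

lemma tdelta_in_tensor_sub_rels:
  "length xs = n \<Longrightarrow> set xs \<subseteq> W \<Longrightarrow> tdelta xs \<in> tensor_sub_rels s n W"
  unfolding tensor_sub_rels_def by (rule F.span_base) blast

lemma tensor_functional_tensor_sub_rels:
  fixes lam :: "nat \<Rightarrow> 'v::ab_group_add \<Rightarrow> 'k::field"
  assumes lam_add: "\<And>j x y. j < n \<Longrightarrow> lam j (x + y) = lam j x + lam j y"
    and lam_scale: "\<And>j c x. j < n \<Longrightarrow> lam j (s c x) = c * lam j x"
    and "j0 < n" and vanish: "\<And>w. w \<in> W \<Longrightarrow> lam j0 w = 0"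
    and f: "f \<in> tensor_sub_rels s n W"
  shows "tensor_functional lam f = 0"
proof -
  note diff = FK.linear_diff[OF linear_tensor_functional]
  note scale = FK.linear_scale[OF linear_tensor_functional]
  have "tensor_functional lam g = 0"
    if "g \<in> multilin_rels s n \<union> tdelta ` {xs. length xs = n \<and> set xs \<subseteq> W}" for g
    using that
  proof (cases rule: tensor_sub_rels_generatorE)
    case (additive xs i a b)
    then show ?thesis
      unfolding additive(1)
      by (simp add: diff tensor_functional_tdelta pure_prod_update lam_add distrib_right)
  next
    case (homogeneous xs i c a)
    then show ?thesis
      unfolding homogeneous(1)
      by (simp add: diff scale tensor_functional_tdelta pure_prod_update lam_scale)
  next
    case (pure xs)
    then have "lam j0 (xs ! j0) = 0"
      using \<open>j0 < n\<close> by (intro vanish) (auto dest: nth_mem)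
    then show ?thesis
      using pure \<open>j0 < n\<close> by (auto simp: tensor_functional_tdelta pure_prod_def)
  qed
  then show ?thesis
    using FK.linear_eq_0_on_span[OF linear_tensor_functional] f unfolding tensor_sub_rels_def by blast
qed

lemma subspace_tdelta_slot:
  assumes s: "module s" and Y: "F.subspace Y" and rels: "tensor_sub_rels s n W \<subseteq> Y"
    and zs: "length zs = n" and m: "m < n"
  shows "module.subspace s {v. tdelta (zs[m := v]) \<in> Y}"
  unfolding module.subspace_def[OF s]
proof (intro conjI ballI allI; clarsimp)
  let ?d = "\<lambda>v. tdelta (zs[m := v]) :: _ \<Rightarrow> 'a"
  have add_rel: "?d (x + y) - ?d x - ?d y \<in> Y" for x y
    using zs m rels additive_rel_in_tensor_sub_rels by blast
  have "- (?d (0 + 0) - ?d 0 - ?d 0) \<in> Y"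
    by (rule F.subspace_neg[OF Y add_rel])
  then show "?d 0 \<in> Y" by simp
  show "?d (x + y) \<in> Y" if "?d x \<in> Y" "?d y \<in> Y" for x y
  proof -
    have "(?d (x + y) - ?d x - ?d y) + ?d x + ?d y \<in> Y"
      by (intro F.subspace_add[OF Y] add_rel that)
    then show ?thesis by simp
  qed
  show "?d (s c x) \<in> Y" if "?d x \<in> Y" for c x
  proof -
    have "?d (s c x) - fscale c (?d x) \<in> Y"
      using zs m rels homogeneous_rel_in_tensor_sub_rels by blast
    then have "(?d (s c x) - fscale c (?d x)) + fscale c (?d x) \<in> Y"
      by (intro F.subspace_add[OF Y] F.subspace_scale[OF Y] that)
    then show ?thesis by simp
  qed
qed

lemma tdelta_in_subspace_if_slots_in_span:
  assumes s: "module s" and Y: "F.subspace Y" and rels: "tensor_sub_rels s n W \<subseteq> Y"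
    and gens: "\<And>zs. length zs = n \<Longrightarrow> \<forall>j<n. zs ! j \<in> A j \<Longrightarrow> tdelta zs \<in> Y"
    and xs: "length xs = n" "\<forall>j<n. xs ! j \<in> module.span s (A j)"
  shows "tdelta xs \<in> Y"
proof -
  have partial: "tdelta zs \<in> Y"
    if "length zs = n"
      and "\<forall>j<n. (j < m \<longrightarrow> zs ! j \<in> module.span s (A j)) \<and> (m \<le> j \<longrightarrow> zs ! j \<in> A j)"
    for m zs
    using that
  proof (induction m arbitrary: zs)
    case 0
    then show ?case using gens by simp
  next
    case (Suc m)
    show ?case
    proof (cases "m < n")
      case False
      then show ?thesis using Suc.prems by (intro Suc.IH) auto
    next
      case True
      have "A m \<subseteq> {v. tdelta (zs[m := v]) \<in> Y}"
      proof
        fix a assume "a \<in> A m"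
        then have "tdelta (zs[m := a]) \<in> Y"
          using Suc.prems by (intro Suc.IH) (auto simp: nth_list_update)
        then show "a \<in> {v. tdelta (zs[m := v]) \<in> Y}" by simp
      qed
      then have "module.span s (A m) \<subseteq> {v. tdelta (zs[m := v]) \<in> Y}"
        using Suc.prems(1) True by (intro module.span_minimal[OF s] subspace_tdelta_slot[OF s Y rels])
      moreover have "zs ! m \<in> module.span s (A m)"
        using Suc.prems(2) True by simp
      ultimately show ?thesis by auto
    qed
  qed
  show ?thesis using partial[of xs n] xs by simp
qed

lemma linear_tensor_act: "Vector_Spaces.linear fscale fscale (tensor_act sigma :: ('v list \<Rightarrow> 'k::field) \<Rightarrow> _)"
  by unfold_locales (auto simp: tensor_act_def fscale_def)

lemma tensor_act_tdelta:
  assumes "bij sigma"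
  shows "tensor_act sigma (tdelta xs) = tdelta (map sigma xs)"
proof -
  have "map (inv sigma) ys = xs \<longleftrightarrow> ys = map sigma xs" for ys
  proof
    assume "map (inv sigma) ys = xs"
    then show "ys = map sigma xs"
      using bij_is_surj[OF assms] by (auto simp: comp_def surj_f_inv_f intro: map_idI[symmetric])
  qed (simp add: comp_def bij_is_inj[OF assms])
  then show ?thesis unfolding tensor_act_def tdelta_def by simp
qed

lemma tensor_act_funpow_tdelta:
  "bij sigma \<Longrightarrow> (tensor_act sigma ^^ i) (tdelta xs) = tdelta (map (sigma ^^ i) xs)"
  by (induction i) (simp_all add: tensor_act_tdelta comp_def)

lemma tensor_act_tensor_sub_rels:
  assumes bij: "bij sigma" and lin: "Vector_Spaces.linear s s sigma" and W: "sigma ` W \<subseteq> W"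
    and f: "f \<in> tensor_sub_rels s n W"
  shows "tensor_act sigma f \<in> tensor_sub_rels s n W"
proof -
  interpret sigma: Vector_Spaces.linear s s sigma by (rule lin)
  note act_diff = FF.linear_diff[OF linear_tensor_act]
  let ?G = "multilin_rels s n \<union> tdelta ` {xs. length xs = n \<and> set xs \<subseteq> W}"
  have "tensor_act sigma g \<in> tensor_sub_rels s n W" if "g \<in> ?G" for g
    using that
  proof (cases rule: tensor_sub_rels_generatorE)
    case (additive xs i a b)
    then show ?thesis
      using additive_rel_in_tensor_sub_rels[of "map sigma xs" n i "sigma a" "sigma b"]
      by (simp add: act_diff tensor_act_tdelta[OF bij] map_update sigma.add)
  next
    case (homogeneous xs i c a)
    then show ?thesis
      using homogeneous_rel_in_tensor_sub_rels[of "map sigma xs" n i s c "sigma a"]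
      by (simp add: act_diff FF.linear_scale[OF linear_tensor_act] tensor_act_tdelta[OF bij]
          map_update sigma.scale)
  next
    case (pure xs)
    then have "set (map sigma xs) \<subseteq> W" using W by auto
    then show ?thesis
      using pure by (simp add: tensor_act_tdelta[OF bij] tdelta_in_tensor_sub_rels)
  qed
  then have "F.span (tensor_act sigma ` ?G) \<subseteq> tensor_sub_rels s n W"
    unfolding tensor_sub_rels_def by (intro F.span_minimal) auto
  then show ?thesis
    using f unfolding tensor_sub_rels_def FF.linear_span_image[OF linear_tensor_act] by blast
qed

locale free_cyclic_quotient = V: vector_space s
  for s :: "'k::field \<Rightarrow> 'v::ab_group_add \<Rightarrow> 'v" +
  fixes sigma :: "'v \<Rightarrow> 'v" and p :: nat and W :: "'v set" and B :: "'v set" and A :: "'v set"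
  assumes linear_sigma: "Vector_Spaces.linear s s sigma"
    and sigma_order: "sigma ^^ p = id" and p_pos: "p > 0"
    and subspace_W: "V.subspace W" and sigma_W: "sigma ` W \<subseteq> W"
    and orbits_independent: "\<And>S c. finite S \<Longrightarrow> S \<subseteq> B \<times> {..<p} \<Longrightarrow>
      (\<Sum>(b, i)\<in>S. s (c (b, i)) ((sigma ^^ i) b)) \<in> W \<Longrightarrow> \<forall>x\<in>S. c x = 0"
    and orbits_span: "UNIV \<subseteq> V.span (W \<union> {(sigma ^^ i) b | b i. b \<in> B \<and> i < p})"
    and A_subset_W: "A \<subseteq> W" and independent_A: "V.independent A" and W_subset_span_A: "W \<subseteq> V.span A"
begin

interpretation sigma: Vector_Spaces.linear s s sigma
  by (rule linear_sigma)

lemma funpow_sigma_add: "(sigma ^^ m) (x + y) = (sigma ^^ m) x + (sigma ^^ m) y"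
  by (induction m) (auto simp: sigma.add)

lemma funpow_sigma_scale: "(sigma ^^ m) (s c x) = s c ((sigma ^^ m) x)"
  by (induction m) (auto simp: sigma.scale)

lemma funpow_sigma_W: "x \<in> W \<Longrightarrow> (sigma ^^ m) x \<in> W"
  by (induction m) (use sigma_W in auto)

lemma funpow_sigma_mod: "(sigma ^^ (m mod p)) x = (sigma ^^ m) x"
  by (rule funpow_mod_eq) (simp add: sigma_order)

lemma bij_sigma: "bij sigma"
proof -
  have order: "sigma ^^ Suc (p - 1) = id"
    using sigma_order p_pos by simp
  show ?thesis
  proof (rule o_bij)
    show "sigma ^^ (p - 1) \<circ> sigma = id" using order by (simp only: funpow_Suc_right)
    show "sigma \<circ> sigma ^^ (p - 1) = id" using order by (simp only: funpow.simps(2))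
  qed
qed

definition orbits :: "'v set" where
  "orbits = {(sigma ^^ i) b | b i. b \<in> B \<and> i < p}"

lemma orbit_eqD:
  assumes "b \<in> B" "b' \<in> B" "i < p" "j < p" "(sigma ^^ i) b = (sigma ^^ j) b'"
  shows "b = b' \<and> i = j"
proof (rule ccontr)
  assume "\<not> (b = b' \<and> i = j)"
  then have ne: "(b, i) \<noteq> (b', j)" by simp
  define c where "c = (\<lambda>x. if x = (b, i) then (1::'k) else -1)"
  have "(\<Sum>(b, i)\<in>{(b, i), (b', j)}. s (c (b, i)) ((sigma ^^ i) b))
      = s 1 ((sigma ^^ i) b) + s (-1) ((sigma ^^ j) b')"
    using ne by (subst sum.insert) (auto simp: c_def)
  also have "\<dots> = 0" using assms(5) by simp
  finally have "\<forall>x\<in>{(b, i), (b', j)}. c x = 0"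
    using assms(1-4) V.subspace_0[OF subspace_W] by (intro orbits_independent) auto
  then show False by (simp add: c_def)
qed

lemma orbit_not_in_W:
  assumes "b \<in> B" "i < p"
  shows "(sigma ^^ i) b \<notin> W"
proof
  assume "(sigma ^^ i) b \<in> W"
  then have "\<forall>x\<in>{(b, i)}. (\<lambda>_. 1::'k) x = 0"
    using assms by (intro orbits_independent) auto
  then show False by simp
qed

lemma orbits_disjoint_W: "orbits \<inter> W = {}"
  unfolding orbits_def using orbit_not_in_W by blast

lemma B_subset_orbits: "B \<subseteq> orbits"
  unfolding orbits_def using p_pos by (force intro: exI[of _ 0])

lemma funpow_sigma_orbits: "x \<in> orbits \<Longrightarrow> (sigma ^^ m) x \<in> orbits"
proof -
  assume "x \<in> orbits"
  then obtain b i where b: "b \<in> B" "i < p" "x = (sigma ^^ i) b" unfolding orbits_def by auto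
  then have "(sigma ^^ m) x = (sigma ^^ ((m + i) mod p)) b"
    by (simp add: funpow_sigma_mod funpow_add)
  moreover have "(m + i) mod p < p" using p_pos by simp
  ultimately show ?thesis using b(1) unfolding orbits_def by blast
qed

definition adapted_basis :: "'v set" where
  "adapted_basis = A \<union> orbits"

lemma inj_on_orbit_map: "inj_on (\<lambda>(b, i). (sigma ^^ i) b) (B \<times> {..<p})"
  by (rule inj_onI) (auto dest: orbit_eqD)

lemma orbit_combination_in_W_imp_zero:
  assumes "finite t" "t \<subseteq> orbits" "(\<Sum>v\<in>t. s (u v) v) \<in> W" "v \<in> t"
  shows "u v = 0"
proof -
  let ?o = "\<lambda>(b, i). (sigma ^^ i) b"
  define S where "S = {x \<in> B \<times> {..<p}. ?o x \<in> t}"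
  have inj: "inj_on ?o S"
    by (rule inj_on_subset[OF inj_on_orbit_map]) (auto simp: S_def)
  have image: "?o ` S = t"
    using assms(2) unfolding S_def orbits_def by force
  have "finite S"
    using finite_imageD[OF _ inj] assms(1) image by simp
  moreover have "(\<Sum>(b, i)\<in>S. s (u ((sigma ^^ i) b)) ((sigma ^^ i) b)) \<in> W"
    using assms(3) sum.reindex[OF inj, of "\<lambda>v. s (u v) v"] image by (simp add: case_prod_unfold)
  ultimately have "\<forall>x\<in>S. (\<lambda>(b, i). u ((sigma ^^ i) b)) x = 0"
    by (intro orbits_independent) (auto simp: S_def)
  then show ?thesis
    using image assms(4) by auto
qed

lemma independent_adapted_basis: "V.independent adapted_basis"
  unfolding V.independent_explicit_module
proof (intro allI impI)
  fix t u v
  assume t: "finite t" "t \<subseteq> adapted_basis" and sum0: "(\<Sum>v\<in>t. s (u v) v) = 0" and v: "v \<in> t"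
  let ?tA = "t \<inter> A" and ?tO = "t - A"
  have split: "(\<Sum>v\<in>?tA. s (u v) v) + (\<Sum>v\<in>?tO. s (u v) v) = 0"
    using sum.Int_Diff[OF t(1), of "\<lambda>v. s (u v) v" A] sum0 by simp
  have "(\<Sum>v\<in>?tA. s (u v) v) \<in> W"
    using A_subset_W by (intro V.subspace_sum[OF subspace_W] V.subspace_scale[OF subspace_W]) auto
  moreover have "(\<Sum>v\<in>?tO. s (u v) v) = - (\<Sum>v\<in>?tA. s (u v) v)"
    using split by (simp add: eq_neg_iff_add_eq_0 add.commute)
  ultimately have "(\<Sum>v\<in>?tO. s (u v) v) \<in> W"
    using V.subspace_neg[OF subspace_W] by simp
  then have zero_O: "u v = 0" if "v \<in> ?tO" for v
    using t that by (intro orbit_combination_in_W_imp_zero[of ?tO]) (auto simp: adapted_basis_def)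
  then have "(\<Sum>v\<in>?tA. s (u v) v) = 0"
    using split by simp
  then have "u v = 0" if "v \<in> ?tA" for v
    using independent_A t(1) that unfolding V.independent_explicit_module by blast
  then show "u v = 0"
    using zero_O v by blast
qed

lemma span_adapted_basis: "V.span adapted_basis = UNIV"
proof -
  have "W \<union> orbits \<subseteq> V.span adapted_basis"
    using W_subset_span_A V.span_mono[of A adapted_basis] V.span_superset[of adapted_basis]
    unfolding adapted_basis_def by blast
  then show ?thesis
    using orbits_span V.span_minimal[OF _ V.subspace_span] unfolding orbits_def by blast
qed

definition coord :: "'v \<Rightarrow> 'v \<Rightarrow> 'k" where
  "coord e v = V.representation adapted_basis v e"

lemma coord_add: "coord e (x + y) = coord e x + coord e y"
  unfolding coord_def
  using V.representation_add[OF independent_adapted_basis] span_adapted_basis by simp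

lemma coord_scale: "coord e (s c x) = c * coord e x"
  unfolding coord_def
  using V.representation_scale[OF independent_adapted_basis] span_adapted_basis by simp

lemma coord_basis: "e' \<in> adapted_basis \<Longrightarrow> coord e e' = (if e = e' then 1 else 0)"
  unfolding coord_def using V.representation_basis[OF independent_adapted_basis] by simp

lemma coord_W_nonzero_imp_A:
  assumes "w \<in> W" "coord e w \<noteq> 0"
  shows "e \<in> A"
proof -
  have "V.representation adapted_basis w = V.representation A w"
    using assms(1) W_subset_span_A
    by (intro V.representation_extend[OF independent_adapted_basis]) (auto simp: adapted_basis_def)
  then show ?thesis
    using assms(2) V.representation_ne_zero unfolding coord_def by metis
qed

definition basis_words :: "nat \<Rightarrow> 'v list set" where
  "basis_words n = {zs. length zs = n \<and> (\<exists>j0<n. (\<forall>j<j0. zs ! j \<in> A) \<and> zs ! j0 \<in> B \<and>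
     (\<forall>j. j0 < j \<and> j < n \<longrightarrow> zs ! j \<in> adapted_basis))}"

lemma basis_words_in_adapted_basis:
  assumes "zs \<in> basis_words n" "j < n"
  shows "zs ! j \<in> adapted_basis"
proof -
  obtain j0 where "\<forall>j<j0. zs ! j \<in> A" "zs ! j0 \<in> B" "\<forall>j. j0 < j \<and> j < n \<longrightarrow> zs ! j \<in> adapted_basis"
    using assms(1) unfolding basis_words_def by blast
  then show ?thesis
    using assms(2) B_subset_orbits unfolding adapted_basis_def
    by (cases j j0 rule: linorder_cases) auto
qed

lemma prod_coord_basis_words:
  assumes es: "es \<in> basis_words n" and ts: "ts \<in> basis_words n" and m: "m < p"
  shows "(\<Prod>j<n. coord (es ! j) ((sigma ^^ m) (ts ! j))) = (if m = 0 \<and> ts = es then 1 else 0)"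
proof (cases "m = 0 \<and> ts = es")
  case True
  then show ?thesis
    using es by (simp add: coord_basis basis_words_in_adapted_basis)
next
  case False
  have "m = 0 \<and> ts = es" if nonzero: "(\<Prod>j<n. coord (es ! j) ((sigma ^^ m) (ts ! j))) \<noteq> 0"
  proof -
    have coord_nz: "coord (es ! j) ((sigma ^^ m) (ts ! j)) \<noteq> 0" if "j < n" for j
      using nonzero that by auto
    have letter_in_A: "es ! j \<in> A" if "j < n" "ts ! j \<in> A" for j
      using coord_W_nonzero_imp_A[OF funpow_sigma_W coord_nz[OF that(1)]] A_subset_W that(2) by blast
    have orbit_eq: "es ! j = (sigma ^^ m) (ts ! j)" if "j < n" "ts ! j \<in> orbits" for j
      using coord_nz[OF that(1)] funpow_sigma_orbits[OF that(2)]
      by (auto simp: coord_basis adapted_basis_def split: if_splits)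
    have orbits_not_in_A: "x \<notin> A" if "x \<in> orbits" for x
      using that A_subset_W orbits_disjoint_W by blast
    obtain j0 where j0: "j0 < n" "\<forall>j<j0. es ! j \<in> A" "es ! j0 \<in> B" and "length es = n"
      using es unfolding basis_words_def by blast
    obtain j1 where j1: "j1 < n" "\<forall>j<j1. ts ! j \<in> A" "ts ! j1 \<in> B" and "length ts = n"
      using ts unfolding basis_words_def by blast
    (* The first B-letters of es and ts sit at the same position; comparing them forces m = 0. *)
    have "\<not> j1 < j0"
    proof
      assume "j1 < j0"
      have "ts ! j1 \<in> orbits" using j1(3) B_subset_orbits by blast
      then have "es ! j1 \<in> orbits" using orbit_eq[OF j1(1)] funpow_sigma_orbits by simp
      then show False using j0(2) \<open>j1 < j0\<close> orbits_not_in_A by blast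
    qed
    moreover have "\<not> j0 < j1"
    proof
      assume "j0 < j1"
      then have "es ! j0 \<in> A" using letter_in_A j0(1) j1(2) by blast
      then show False using j0(3) B_subset_orbits orbits_not_in_A by blast
    qed
    ultimately have "j0 = j1" by simp
    then have "(sigma ^^ 0) (es ! j0) = (sigma ^^ m) (ts ! j0)"
      using orbit_eq j0(1) j1(3) B_subset_orbits by auto
    then have "m = 0"
      using orbit_eqD[of "es ! j0" "ts ! j0" 0 m] j0(3) j1(3) \<open>j0 = j1\<close> m p_pos by auto
    moreover have "ts = es"
    proof (rule nth_equalityI)
      show "length ts = length es" using \<open>length es = n\<close> \<open>length ts = n\<close> by simp
      fix j assume "j < length ts"
      then have "j < n" using \<open>length ts = n\<close> by simp
      then show "ts ! j = es ! j"
        using coord_nz[OF \<open>j < n\<close>] \<open>m = 0\<close> coord_basis[OF basis_words_in_adapted_basis[OF ts]]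
        by (auto split: if_splits)
    qed
    ultimately show ?thesis by simp
  qed
  then show ?thesis using False by auto
qed

definition orbit_gens :: "nat \<Rightarrow> ('v list \<Rightarrow> 'k) set" where
  "orbit_gens n = {(tensor_act sigma ^^ i) b | b i. b \<in> tdelta ` basis_words n \<and> i < p}"

definition gen_span :: "nat \<Rightarrow> ('v list \<Rightarrow> 'k) set" where
  "gen_span n = F.span (tensor_sub_rels s n W \<union> orbit_gens n)"

lemma funpow_tensor_act_tdelta_mod:
  "(tensor_act sigma ^^ (m mod p)) (tdelta xs) = (tensor_act sigma ^^ m) (tdelta xs)"
  by (rule funpow_mod_eq) (simp add: tensor_act_funpow_tdelta[OF bij_sigma] sigma_order)

lemma tensor_act_gen_span:
  assumes "x \<in> gen_span n"
  shows "tensor_act sigma x \<in> gen_span n"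
proof -
  let ?G = "tensor_sub_rels s n W \<union> orbit_gens n"
  have "tensor_act sigma ` orbit_gens n \<subseteq> orbit_gens n"
  proof
    fix y assume "y \<in> tensor_act sigma ` orbit_gens n"
    then obtain zs i where zs: "zs \<in> basis_words n"
      and y: "y = (tensor_act sigma ^^ (Suc i mod p)) (tdelta zs)"
      unfolding orbit_gens_def funpow_tensor_act_tdelta_mod by auto
    moreover have "Suc i mod p < p" using p_pos by simp
    ultimately show "y \<in> orbit_gens n" unfolding orbit_gens_def by blast
  qed
  then have "tensor_act sigma ` ?G \<subseteq> ?G"
    using tensor_act_tensor_sub_rels[OF bij_sigma linear_sigma sigma_W] by blast
  then have "tensor_act sigma ` gen_span n \<subseteq> gen_span n"
    unfolding gen_span_def FF.linear_span_image[OF linear_tensor_act, symmetric] by (rule F.span_mono)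
  then show ?thesis using assms by blast
qed

lemma funpow_tensor_act_gen_span: "x \<in> gen_span n \<Longrightarrow> (tensor_act sigma ^^ d) x \<in> gen_span n"
  by (induction d) (simp_all add: tensor_act_gen_span)

lemma tdelta_in_gen_span_if_anchored:
  assumes ys: "length ys = n" and j0: "j0 < n" and W: "\<forall>j<j0. ys ! j \<in> W"
    and b: "b \<in> B" and d: "d < p" and anchor: "ys ! j0 = (sigma ^^ d) b"
  shows "tdelta ys \<in> gen_span n"
proof -
  define zs where "zs = map (sigma ^^ (p - d)) ys"
  have undo: "(sigma ^^ d) \<circ> (sigma ^^ (p - d)) = id" "(sigma ^^ (p - d)) \<circ> (sigma ^^ d) = id"
    using d sigma_order by (simp_all flip: funpow_add)
  have zs_in: "tdelta zs \<in> gen_span n"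
  proof (rule tdelta_in_subspace_if_slots_in_span[OF V.module_axioms _ _ _ _,
        of _ n W "\<lambda>j. if j < j0 then A else if j = j0 then {b} else adapted_basis"])
    show "F.subspace (gen_span n)" unfolding gen_span_def by simp
    show "tensor_sub_rels s n W \<subseteq> gen_span n" unfolding gen_span_def using F.span_superset by blast
    show "length zs = n" using ys by (simp add: zs_def)
    fix ws :: "'v list"
    assume "length ws = n"
      and slots: "\<forall>j<n. ws ! j \<in> (if j < j0 then A else if j = j0 then {b} else adapted_basis)"
    have "ws ! j \<in> A" if "j < j0" for j using slots[rule_format, of j] that j0 by simp
    moreover have "ws ! j0 \<in> B" using slots[rule_format, OF j0] b by simp
    moreover have "ws ! j \<in> adapted_basis" if "j0 < j" "j < n" for j
      using slots[rule_format, of j] that by simp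
    ultimately have "ws \<in> basis_words n"
      unfolding basis_words_def using \<open>length ws = n\<close> j0 by blast
    then have "(tensor_act sigma ^^ 0) (tdelta ws) \<in> orbit_gens n"
      unfolding orbit_gens_def using p_pos by blast
    then show "tdelta ws \<in> gen_span n" unfolding gen_span_def by (simp add: F.span_base)
  next
    have "zs ! j0 = b" using j0 ys anchor undo(2) by (simp add: zs_def pointfree_idE)
    moreover have "zs ! j \<in> W" if "j < j0" for j
      using that j0 ys W funpow_sigma_W by (simp add: zs_def)
    ultimately show "\<forall>j<n. zs ! j \<in> V.span (if j < j0 then A else if j = j0 then {b} else adapted_basis)"
      using W_subset_span_A span_adapted_basis by (auto simp: V.span_base)
  qed
  have "(tdelta ys :: 'v list \<Rightarrow> 'k) = (tensor_act sigma ^^ d) (tdelta zs)"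
    by (simp add: tensor_act_funpow_tdelta[OF bij_sigma] zs_def undo(1))
  then show ?thesis using funpow_tensor_act_gen_span[OF zs_in] by simp
qed

lemma tdelta_in_gen_span:
  assumes xs: "length xs = n"
  shows "(tdelta xs :: 'v list \<Rightarrow> 'k) \<in> gen_span n"
proof (rule tdelta_in_subspace_if_slots_in_span[OF V.module_axioms _ _ _ xs, of _ W "\<lambda>_. adapted_basis"])
  show "F.subspace (gen_span n)" unfolding gen_span_def by simp
  show rels: "tensor_sub_rels s n W \<subseteq> gen_span n" unfolding gen_span_def using F.span_superset by blast
  show "\<forall>j<n. xs ! j \<in> V.span adapted_basis" using span_adapted_basis by simp
  fix zs :: "'v list" assume zs: "length zs = n" "\<forall>j<n. zs ! j \<in> adapted_basis"
  show "tdelta zs \<in> gen_span n"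
  proof (cases "\<forall>j<n. zs ! j \<in> A")
    case True
    then have "set zs \<subseteq> A" using zs(1) by (auto simp: in_set_conv_nth)
    then have "set zs \<subseteq> W" using A_subset_W by blast
    then show ?thesis using rels tdelta_in_tensor_sub_rels zs(1) by blast
  next
    case False
    then obtain j0 where j0: "j0 < n" "zs ! j0 \<notin> A" and before: "\<forall>j<j0. zs ! j \<in> A"
      using exists_least_iff[of "\<lambda>j. j < n \<and> zs ! j \<notin> A"] by auto
    then have "zs ! j0 \<in> orbits" using zs(2) by (auto simp: adapted_basis_def)
    then obtain b d where "b \<in> B" "d < p" "zs ! j0 = (sigma ^^ d) b" unfolding orbits_def by blast
    moreover have "\<forall>j<j0. zs ! j \<in> W" using before A_subset_W by blast
    ultimately show ?thesis using tdelta_in_gen_span_if_anchored zs(1) j0(1) by blast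
  qed
qed

lemma orbit_gens_independent:
  assumes S: "finite S" "S \<subseteq> tdelta ` basis_words n \<times> {..<p}"
    and rel: "(\<Sum>(b, i)\<in>S. fscale (c (b, i)) ((tensor_act sigma ^^ i) b)) \<in> tensor_sub_rels s n W"
    and x0: "x0 \<in> S"
  shows "c x0 = 0"
proof -
  obtain es i0 where x0_eq: "x0 = (tdelta es, i0)" and es: "es \<in> basis_words n" and i0: "i0 < p"
    using x0 S(2) by blast
  obtain j0 where j0: "j0 < n" "es ! j0 \<in> B"
    using es unfolding basis_words_def by blast
  define lam where "lam j v = coord (es ! j) ((sigma ^^ (p - i0)) v)" for j v
  have "lam j0 w = 0" if "w \<in> W" for w
    using coord_W_nonzero_imp_A[OF funpow_sigma_W[OF that]] j0(2) B_subset_orbits A_subset_W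
      orbits_disjoint_W unfolding lam_def by blast
  then have "tensor_functional lam (\<Sum>(b, i)\<in>S. fscale (c (b, i)) ((tensor_act sigma ^^ i) b)) = 0"
    using j0(1) rel
    by (intro tensor_functional_tensor_sub_rels[where s = s])
      (simp_all add: lam_def funpow_sigma_add funpow_sigma_scale coord_add coord_scale)
  also have "tensor_functional lam (\<Sum>(b, i)\<in>S. fscale (c (b, i)) ((tensor_act sigma ^^ i) b))
      = (\<Sum>(b, i)\<in>S. c (b, i) * tensor_functional lam ((tensor_act sigma ^^ i) b))"
    by (simp add: FK.linear_sum[OF linear_tensor_functional] FK.linear_scale[OF linear_tensor_functional] case_prod_unfold)
  also have "\<dots> = (\<Sum>x\<in>S. if x = x0 then c x0 else 0)"
  proof (rule sum.cong[OF refl], clarify)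
    fix b i assume "(b, i) \<in> S"
    then obtain ts where b: "b = tdelta ts" and ts: "ts \<in> basis_words n" and i: "i < p"
      using S(2) by blast
    have "length ts = n" using ts unfolding basis_words_def by blast
    have shift: "(sigma ^^ (p - i0)) ((sigma ^^ i) v) = (sigma ^^ ((p - i0 + i) mod p)) v" for v
      by (simp add: funpow_sigma_mod funpow_add)
    have "tensor_functional lam ((tensor_act sigma ^^ i) b)
        = (\<Prod>j<n. coord (es ! j) ((sigma ^^ ((p - i0 + i) mod p)) (ts ! j)))"
      using \<open>length ts = n\<close>
      by (simp add: b tensor_act_funpow_tdelta[OF bij_sigma] tensor_functional_tdelta pure_prod_def lam_def shift)
    also have "\<dots> = (if (b, i) = x0 then 1 else 0)"
    proof -
      have "(p - i0 + i) mod p = 0 \<longleftrightarrow> i = i0"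
        using i i0 by (cases "i0 \<le> i") (auto simp: mod_if le_mod_geq)
      then show ?thesis
        using prod_coord_basis_words[OF es ts] p_pos by (auto simp: x0_eq b inj_eq[OF inj_tdelta])
    qed
    finally show "c (b, i) * tensor_functional lam ((tensor_act sigma ^^ i) b) = (if (b, i) = x0 then c x0 else 0)"
      by simp
  qed
  also have "\<dots> = c x0" using S(1) x0 by simp
  finally show ?thesis by simp
qed

lemma free_quot_tensor_power:
  "free_quot fscale p (tensor_act sigma) (free_on_lists n) (tensor_sub_rels s n W)"
  unfolding free_quot_def
proof (intro exI[of _ "tdelta ` basis_words n"] conjI allI impI)
  show "tdelta ` basis_words n \<subseteq> free_on_lists n"
    unfolding free_on_lists_def basis_words_def by (auto intro: F.span_base)
  show "free_on_lists n \<subseteq> F.span (tensor_sub_rels s n W \<union>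
      {(tensor_act sigma ^^ i) b |b i. b \<in> tdelta ` basis_words n \<and> i < p})"
    unfolding free_on_lists_def
    using tdelta_in_gen_span by (intro F.span_minimal) (auto simp: gen_span_def orbit_gens_def)
qed (use orbit_gens_independent in blast)

end

theorem lemma2p8:
  fixes s :: "'k::field \<Rightarrow> 'v::ab_group_add \<Rightarrow> 'v"
    and sigma :: "'v \<Rightarrow> 'v"
    and W :: "'v set"
    and p n :: nat
  assumes char: "CHAR('k) = p" and ppos: "p > 0"
    and perfect: "surj (\<lambda>x::'k. x ^ p)"
    and vs: "vector_space s"
    and lin: "Vector_Spaces.linear s s sigma"
    and order: "sigma ^^ p = id"
    and Wsub: "module.subspace s W"
    and Wstable: "sigma ` W \<subseteq> W"
    and free: "free_quot s p sigma UNIV W"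
    and n: "n \<ge> 2"
  shows "free_quot fscale p (tensor_act sigma) (free_on_lists n) (tensor_sub_rels s n W)"
proof -
  obtain B where
    "\<forall>S c. finite S \<longrightarrow> S \<subseteq> B \<times> {..<p} \<longrightarrow>
       (\<Sum>(b, i)\<in>S. s (c (b, i)) ((sigma ^^ i) b)) \<in> W \<longrightarrow> (\<forall>x\<in>S. c x = 0)"
    and "UNIV \<subseteq> module.span s (W \<union> {(sigma ^^ i) b | b i. b \<in> B \<and> i < p})"
    using free unfolding free_quot_def by blast
  moreover obtain A where "A \<subseteq> W" "module.independent s A" "W \<subseteq> module.span s A"
    using vector_space.maximal_independent_subset[OF vs] by blast
  ultimately interpret free_cyclic_quotient s sigma p W B A
    using vs lin order ppos Wsub Wstable
    unfolding free_cyclic_quotient_def free_cyclic_quotient_axioms_def by blast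
  show ?thesis by (rule free_quot_tensor_power)
qed

end
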